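(* Let $n\le -1$ be an odd integer with $3\mid n$. If $n\equiv 3\pmod 4$, then $w$ does not divide $q_n$ modulo $3$. If $n\equiv 1\pmod 4$, then $w^2$ divides $q_n$ modulo $3$ but $w^3$ does not.
   Context: Define $q_n\in\mathbb{Z}[w]$ for odd $n\le -1$ by $q_{-1}=w^3-w^2+2w-7$, $q_{-3}=w^5-2w^4-2w^3+5w^2+3w-9$, $q_{-5}=w^7-2w^6-4w^5+8w^4+4w^3-7w^2+2w-7$, and $q_n=(w^2-1)(q_{n+2}-q_{n+4})+q_{n+6}$ for odd $n<-5$. Divisibility "modulo 3" refers to the reductions in $\mathbb{F}_3[w]$. *)

theory Defs
  imports "HOL-Computational_Algebra.Polynomial" "HOL-Library.Numeral_Type"
begin

text \<open>Q k is the polynomial q_n for n = -(2k+1).\<close>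
fun Q :: "nat \<Rightarrow> int poly" where
  "Q 0 = [:-7, 2, -1, 1:]"
| "Q (Suc 0) = [:-9, 3, 5, -2, -2, 1:]"
| "Q (Suc (Suc 0)) = [:-7, 2, -7, 4, 8, -4, -2, 1:]"
| "Q (Suc (Suc (Suc k))) = ([:-1, 0, 1:]) * (Q (Suc (Suc k)) - Q (Suc k)) + Q k"

text \<open>q n for odd n \<le> -1 (value irrelevant otherwise).\<close>
definition q :: "int \<Rightarrow> int poly" where
  "q n = Q (nat ((- n - 1) div 2))"

definition mod3 :: "int poly \<Rightarrow> 3 poly" where
  "mod3 p = map_poly (of_int :: int \<Rightarrow> 3) p"

end

theory Submission
  imports Defs
begin

(* Divisibility of a polynomial by w^j only depends on its coefficients of
   w^0, ..., w^(j-1), so it suffices to know the three lowest coefficients of q_n modulo 3.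
   Writing q_n = Q k with n = -(2k+1), the recurrence
     Q (k+3) = (w^2 - 1) (Q (k+2) - Q (k+1)) + Q k
   expresses the three lowest coefficients of Q (k+3) through those of Q k, Q (k+1), Q (k+2).
   Reduced modulo 3, these coefficients are periodic in k: the constant and linear ones are
   2, 0, 2, 0, ... (period 2), the quadratic one is 2, 2, 2, 1, 1, 1, ... (period 6).
   Finally, for odd n <= -1 with 3 dvd n, n mod 4 = 3 forces k mod 6 = 4 and n mod 4 = 1
   forces k mod 6 = 1, and the theorem is read off from the table of coefficients. *)

lemma x_power_dvd_iff:
  "[:0, 1:] ^ j dvd (p :: 'a :: comm_ring_1 poly) \<longleftrightarrow> (\<forall>i < j. coeff p i = 0)"
  using monom_1_dvd_iff'[of j p] by (simp add: monom_altdef)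

lemma times_w2_minus_1: "[:-1, 0, 1:] * p = pCons 0 (pCons 0 p) - (p :: 'a :: comm_ring_1 poly)"
  by (simp add: algebra_simps)

lemma coeff_recurrence_step:
  fixes a b c :: "'a :: comm_ring_1 poly"
  defines "r \<equiv> [:-1, 0, 1:] * (a - b) + c"
  shows "coeff r 0 = coeff c 0 - (coeff a 0 - coeff b 0)"
    and "coeff r 1 = coeff c 1 - (coeff a 1 - coeff b 1)"
    and "coeff r 2 = coeff c 2 - (coeff a 2 - coeff b 2) + (coeff a 0 - coeff b 0)"
  by (simp_all add: r_def times_w2_minus_1 numeral_2_eq_2)

lemma coeff_mod3: "coeff (mod3 p) i = of_int (coeff p i)"
  by (simp add: mod3_def coeff_map_poly)

lemma mod3_Q_step:
  fixes k :: nat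
  defines "c \<equiv> \<lambda>j i. coeff (mod3 (Q j)) i"
  shows "c (Suc (Suc (Suc k))) 0 = c k 0 - (c (Suc (Suc k)) 0 - c (Suc k) 0)"
    and "c (Suc (Suc (Suc k))) 1 = c k 1 - (c (Suc (Suc k)) 1 - c (Suc k) 1)"
    and "c (Suc (Suc (Suc k))) 2
           = c k 2 - (c (Suc (Suc k)) 2 - c (Suc k) 2) + (c (Suc (Suc k)) 0 - c (Suc k) 0)"
  unfolding c_def coeff_mod3 Q.simps(4) coeff_recurrence_step by simp_all

lemma mod3_Q_low_coeffs:
  "coeff (mod3 (Q k)) 0 = (if even k then 2 else 0)
   \<and> coeff (mod3 (Q k)) 1 = (if even k then 2 else 0)
   \<and> coeff (mod3 (Q k)) 2 = (if k mod 6 < 3 then 2 else 1)"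
proof (induction k rule: Q.induct)
  case (4 k)
  have parity: "even k \<longleftrightarrow> even (k mod 6)"
    by presburger
  have "k mod 6 < 6"
    by simp
  then consider "k mod 6 = 0" | "k mod 6 = 1" | "k mod 6 = 2"
    | "k mod 6 = 3" | "k mod 6 = 4" | "k mod 6 = 5"
    by linarith
  then show ?case
    unfolding mod3_Q_step using "4.IH" by cases (simp_all add: parity mod_Suc)
qed (simp_all add: coeff_mod3 numeral_2_eq_2)

lemma q_eq_Q: "q (- 2 * int k - 1) = Q k"
  unfolding q_def by simp

theorem proposition5p1:
  fixes n :: int
  assumes "n \<le> -1" and "odd n" and "3 dvd n"
  shows "(n mod 4 = 3 \<longrightarrow> \<not> [:0, 1:] dvd mod3 (q n))
       \<and> (n mod 4 = 1 \<longrightarrow> [:0, 1:] ^ 2 dvd mod3 (q n) \<and> \<not> [:0, 1:] ^ 3 dvd mod3 (q n))"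
proof -
  obtain m where "n = 2 * m + 1"
    using assms(2) by (rule oddE)
  then obtain k :: nat where n: "n = - 2 * int k - 1"
    using assms(1) by (intro that[of "nat (- m - 1)"]) simp
  have "q n = Q k"
    unfolding n by (rule q_eq_Q)
  then have low: "coeff (mod3 (q n)) 0 = (if even k then 2 else 0)"
    "coeff (mod3 (q n)) 1 = (if even k then 2 else 0)"
    "coeff (mod3 (q n)) 2 = (if k mod 6 < 3 then 2 else 1)"
    using mod3_Q_low_coeffs[of k] by simp_all
  show ?thesis
  proof (intro conjI impI)
    assume "n mod 4 = 3"
    then have "even k"
      unfolding n by presburger
    then have "coeff (mod3 (q n)) 0 \<noteq> 0"
      using low by simp
    then show "\<not> [:0, 1:] dvd mod3 (q n)"
      using x_power_dvd_iff[of 1] by auto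
  next
    assume "n mod 4 = 1"
    then have "k mod 6 = 1"
      using assms(3) unfolding n by presburger
    then have "odd k" and "k mod 6 < 3"
      by presburger+
    then have "coeff (mod3 (q n)) 0 = 0" "coeff (mod3 (q n)) 1 = 0" "coeff (mod3 (q n)) 2 \<noteq> 0"
      using low by simp_all
    then show "[:0, 1:] ^ 2 dvd mod3 (q n)" and "\<not> [:0, 1:] ^ 3 dvd mod3 (q n)"
      unfolding x_power_dvd_iff by (auto simp: less_Suc_eq numeral_2_eq_2 numeral_3_eq_3)
  qed
qed

end
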